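(* Let $L$ be a minimal Koszul $L_\infty$-algebra and let $W=L^{(1)}$ be its weight one part. Then the canonical strict morphism of $L_\infty$-algebras $\mathbb{L}_\infty(W)\to L$ (extending the inclusion $W\subseteq L$) is surjective; that is, $L$ is generated in weight $1$.
   Context: Over $\mathbb Q$. An $L_\infty$-algebra $L$ (operations $l_n$ of degree $n-2$) is Koszul if it is equipped with a weight grading $L=\bigoplus_{w\ge1}L^{(w)}$ such that each $l_n$ is homogeneous of weight $2-n$ and the cochain complex $C^{CE}_*(L)^{(0)}\xrightarrow{b}C^{CE}_*(L)^{(1)}\xrightarrow{b}\cdots$ is exact, where $C^{CE}_*(L)=(\Lambda^c(sL),d+b)$ is the Chevalley–Eilenberg complex (cofree cocommutative coalgebra on $sL$ with the coderivation encoding the $l_n$), weight graded by letting $s$ have weight $-1$ (so $d+b$ raises weight by 1). $L$ is minimal if its differential is zero. $\mathbb{L}_\infty(W)$ denotes the free $L_\infty$-algebra on $W$; a strict morphism is one commuting with all operations. *)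

theory Defs
  imports Complex_Main
begin

(* A bigraded Q-vector space L = (+)_{d,w} L_d^{(w)} is given by a family of
   subspaces V d w of an ambient Q-vector space 'a (scalar multiplication scale);
   L is the EXTERNAL direct sum of the V d w, so we only ever work with
   homogeneous "tagged" elements (d, w, x) with x \<in> V d w
   (d = homological degree, w = weight).  All operations are determined by
   their values on homogeneous elements.  The operation l_n is given by
   l applied to a list of n tagged elements. *)

type_synonym 'a tg = "int \<times> int \<times> 'a"

definition tdeg :: "'a tg \<Rightarrow> int" where "tdeg t = fst t"
definition twt :: "'a tg \<Rightarrow> int" where "twt t = fst (snd t)"
definition tel :: "'a tg \<Rightarrow> 'a" where "tel t = snd (snd t)"

definition valid :: "(int \<Rightarrow> int \<Rightarrow> 'a set) \<Rightarrow> 'a tg \<Rightarrow> bool" where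
  "valid V t \<longleftrightarrow> tel t \<in> V (tdeg t) (twt t)"

definition sgn :: "int \<Rightarrow> rat" where
  "sgn k = (if even k then 1 else -1)"

definition is_subspace :: "(rat \<Rightarrow> 'a::ab_group_add \<Rightarrow> 'a) \<Rightarrow> 'a set \<Rightarrow> bool" where
  "is_subspace scale S \<longleftrightarrow> 0 \<in> S \<and> (\<forall>x\<in>S. \<forall>y\<in>S. x + y \<in> S) \<and> (\<forall>a. \<forall>x\<in>S. scale a x \<in> S)"

definition is_Q_vector_space :: "(rat \<Rightarrow> 'a::ab_group_add \<Rightarrow> 'a) \<Rightarrow> bool" where
  "is_Q_vector_space scale \<longleftrightarrow>
     (\<forall>a x y. scale a (x + y) = scale a x + scale a y) \<and>
     (\<forall>a b x. scale (a + b) x = scale a x + scale b x) \<and>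
     (\<forall>a b x. scale a (scale b x) = scale (a * b) x) \<and>
     (\<forall>x. scale 1 x = x)"

definition sdeg :: "'a tg list \<Rightarrow> int" where "sdeg ts = (\<Sum>t\<leftarrow>ts. tdeg t)"
definition swt :: "'a tg list \<Rightarrow> int" where "swt ts = (\<Sum>t\<leftarrow>ts. twt t)"

definition out_tag :: "(('a tg list) \<Rightarrow> 'a) \<Rightarrow> 'a tg list \<Rightarrow> 'a tg" where
  "out_tag l ts = (sdeg ts + int (length ts) - 2, swt ts + 2 - int (length ts), l ts)"

definition l_typed :: "(int \<Rightarrow> int \<Rightarrow> 'a set) \<Rightarrow> ('a tg list \<Rightarrow> 'a) \<Rightarrow> bool" where
  "l_typed V l \<longleftrightarrow> (\<forall>ts. length ts \<ge> 1 \<longrightarrow> list_all (valid V) ts \<longrightarrow> valid V (out_tag l ts))"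

definition l_multilinear :: "(rat \<Rightarrow> 'a::ab_group_add \<Rightarrow> 'a) \<Rightarrow> (int \<Rightarrow> int \<Rightarrow> 'a set) \<Rightarrow> ('a tg list \<Rightarrow> 'a) \<Rightarrow> bool" where
  "l_multilinear scale V l \<longleftrightarrow>
     (\<forall>ts i d w x y a b. list_all (valid V) ts \<longrightarrow> i < length ts \<longrightarrow> x \<in> V d w \<longrightarrow> y \<in> V d w \<longrightarrow>
        l (ts[i := (d, w, scale a x + scale b y)]) =
          scale a (l (ts[i := (d, w, x)])) + scale b (l (ts[i := (d, w, y)])))"

definition l_antisymmetric :: "(rat \<Rightarrow> 'a::ab_group_add \<Rightarrow> 'a) \<Rightarrow> (int \<Rightarrow> int \<Rightarrow> 'a set) \<Rightarrow> ('a tg list \<Rightarrow> 'a) \<Rightarrow> bool" where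
  "l_antisymmetric scale V l \<longleftrightarrow>
     (\<forall>us s t vs. list_all (valid V) (us @ [s, t] @ vs) \<longrightarrow>
        l (us @ [s, t] @ vs) = scale (- sgn (tdeg s * tdeg t)) (l (us @ [t, s] @ vs)))"

(* ---------------- The Chevalley-Eilenberg complex (Lambda^c(sL), d+b) ----------------
   Lambda(sL) is realised as the graded-symmetric coinvariants of the tensor algebra on sL:
   formal Q-linear combinations of words of tagged elements (a word [t1,..,tk] stands for
   s t1 ... s tk), modulo the subspace spanned by multilinearity and graded-symmetry relations
   (with respect to the suspended degree tdeg t + 1).  Over Q this is the cofree cocommutative
   (conilpotent) coalgebra on sL as a graded vector space. *)

type_synonym 'a fsum = "'a tg list \<Rightarrow> rat"

definition word :: "'a tg list \<Rightarrow> 'a fsum" where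
  "word ys = (\<lambda>z. if z = ys then 1 else 0)"

definition fs_add :: "'a fsum \<Rightarrow> 'a fsum \<Rightarrow> 'a fsum" where
  "fs_add f g = (\<lambda>z. f z + g z)"
definition fs_scale :: "rat \<Rightarrow> 'a fsum \<Rightarrow> 'a fsum" where
  "fs_scale c f = (\<lambda>z. c * f z)"
definition fs_diff :: "'a fsum \<Rightarrow> 'a fsum \<Rightarrow> 'a fsum" where
  "fs_diff f g = (\<lambda>z. f z - g z)"

definition supp :: "'a fsum \<Rightarrow> 'a tg list set" where
  "supp f = {z. f z \<noteq> 0}"

definition shdeg :: "'a tg \<Rightarrow> int" where "shdeg t = tdeg t + 1"

inductive_set rel_space :: "(rat \<Rightarrow> 'a::ab_group_add \<Rightarrow> 'a) \<Rightarrow> (int \<Rightarrow> int \<Rightarrow> 'a set) \<Rightarrow> 'a fsum set"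
  for scale V where
  rel_zero: "(\<lambda>z. 0) \<in> rel_space scale V"
| rel_add: "f \<in> rel_space scale V \<Longrightarrow> g \<in> rel_space scale V \<Longrightarrow> fs_add f g \<in> rel_space scale V"
| rel_scale: "f \<in> rel_space scale V \<Longrightarrow> fs_scale c f \<in> rel_space scale V"
| rel_lin: "list_all (valid V) ys \<Longrightarrow> i < length ys \<Longrightarrow> x \<in> V d w \<Longrightarrow> y \<in> V d w \<Longrightarrow>
     fs_diff (word (ys[i := (d, w, scale a x + scale b y)]))
        (fs_add (fs_scale a (word (ys[i := (d, w, x)]))) (fs_scale b (word (ys[i := (d, w, y)]))))
     \<in> rel_space scale V"
| rel_sym: "list_all (valid V) (us @ [s, t] @ vs) \<Longrightarrow>
     fs_diff (word (us @ [s, t] @ vs)) (fs_scale (sgn (shdeg s * shdeg t)) (word (us @ [t, s] @ vs)))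
     \<in> rel_space scale V"

(* decalage sign: q_n(s x_1,...,s x_n) = (-1)^{sum_i (n-i)|x_i|} s l_n(x_1,...,x_n) *)
definition dec_sign :: "'a tg list \<Rightarrow> rat" where
  "dec_sign ts = sgn (\<Sum>i<length ts. int (length ts - 1 - i) * tdeg (ts ! i))"

(* Koszul sign of the unshuffle moving the positions S of ys to the front *)
definition kos_sign :: "nat set \<Rightarrow> 'a tg list \<Rightarrow> rat" where
  "kos_sign S ys = sgn (\<Sum>(i, j)\<in>{(i, j). i < j \<and> j < length ys \<and> i \<notin> S \<and> j \<in> S}.
                          shdeg (ys ! i) * shdeg (ys ! j))"

(* coderivation on a word, using the brackets q_k with k \<in> K:
   y_1...y_n |-> sum over unshuffles (S, S^c), |S| \<in> K, of
                  eps * q_{|S|}(y_S) . y_{S^c} *)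
definition cod_word :: "nat set \<Rightarrow> ('a tg list \<Rightarrow> 'a) \<Rightarrow> 'a tg list \<Rightarrow> 'a fsum" where
  "cod_word K l ys = (\<lambda>z. \<Sum>S\<in>{S. S \<subseteq> {..<length ys} \<and> card S \<in> K}.
       (if z = out_tag l (nths ys S) # nths ys ({..<length ys} - S)
        then kos_sign S ys * dec_sign (nths ys S) else 0))"

definition cod :: "nat set \<Rightarrow> ('a tg list \<Rightarrow> 'a) \<Rightarrow> 'a fsum \<Rightarrow> 'a fsum" where
  "cod K l f = (\<lambda>z. \<Sum>ys\<in>supp f. f ys * cod_word K l ys z)"

definition CE_D :: "('a tg list \<Rightarrow> 'a) \<Rightarrow> 'a fsum \<Rightarrow> 'a fsum" where
  "CE_D l = cod {1..} l"
definition CE_b :: "('a tg list \<Rightarrow> 'a) \<Rightarrow> 'a fsum \<Rightarrow> 'a fsum" where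
  "CE_b l = cod {2..} l"

(* L_infinity relations: (d+b)^2 = 0 on the CE complex *)
definition CE_square_zero :: "(rat \<Rightarrow> 'a::ab_group_add \<Rightarrow> 'a) \<Rightarrow> (int \<Rightarrow> int \<Rightarrow> 'a set) \<Rightarrow> ('a tg list \<Rightarrow> 'a) \<Rightarrow> bool" where
  "CE_square_zero scale V l \<longleftrightarrow>
     (\<forall>ys. list_all (valid V) ys \<longrightarrow> CE_D l (CE_D l (word ys)) \<in> rel_space scale V)"

definition Linf_algebra :: "(rat \<Rightarrow> 'a::ab_group_add \<Rightarrow> 'a) \<Rightarrow> (int \<Rightarrow> int \<Rightarrow> 'a set) \<Rightarrow> ('a tg list \<Rightarrow> 'a) \<Rightarrow> bool" where
  "Linf_algebra scale V l \<longleftrightarrow>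
     is_Q_vector_space scale \<and> (\<forall>d w. is_subspace scale (V d w)) \<and>
     l_typed V l \<and> l_multilinear scale V l \<and> l_antisymmetric scale V l \<and>
     CE_square_zero scale V l"

definition minimal_Linf :: "(int \<Rightarrow> int \<Rightarrow> 'a::zero set) \<Rightarrow> ('a tg list \<Rightarrow> 'a) \<Rightarrow> bool" where
  "minimal_Linf V l \<longleftrightarrow> (\<forall>t. valid V t \<longrightarrow> l [t] = 0)"

(* elements of the CE complex, and its weight grading (s has weight -1) *)
definition CE_elem :: "(int \<Rightarrow> int \<Rightarrow> 'a set) \<Rightarrow> 'a fsum \<Rightarrow> bool" where
  "CE_elem V f \<longleftrightarrow> finite (supp f) \<and> (\<forall>ys\<in>supp f. list_all (valid V) ys)"

definition word_weight :: "'a tg list \<Rightarrow> int" where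
  "word_weight ys = (\<Sum>t\<leftarrow>ys. twt t - 1)"

definition of_weight :: "int \<Rightarrow> 'a fsum \<Rightarrow> bool" where
  "of_weight p f \<longleftrightarrow> (\<forall>ys\<in>supp f. word_weight ys = p)"

(* Koszul: weights \<ge> 1, and C^(0) -> C^(1) -> C^(2) -> ... (differential b) is exact,
   i.e. exact at C^(p) for every p \<ge> 1 (cohomology concentrated in weight 0). *)
definition koszul :: "(rat \<Rightarrow> 'a::ab_group_add \<Rightarrow> 'a) \<Rightarrow> (int \<Rightarrow> int \<Rightarrow> 'a set) \<Rightarrow> ('a tg list \<Rightarrow> 'a) \<Rightarrow> bool" where
  "koszul scale V l \<longleftrightarrow>
     (\<forall>d w. w < 1 \<longrightarrow> V d w = {0}) \<and>
     (\<forall>p f. p \<ge> 1 \<longrightarrow> CE_elem V f \<longrightarrow> of_weight p f \<longrightarrow> CE_b l f \<in> rel_space scale V \<longrightarrow>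
        (\<exists>g. CE_elem V g \<and> of_weight (p - 1) g \<and> fs_diff f (CE_b l g) \<in> rel_space scale V))"

(* The image of the canonical strict morphism L_inf(W) -> L, W = L^(1):
   the smallest bigraded subspace containing W closed under all operations l_n. *)
inductive gen_wt1 :: "(rat \<Rightarrow> 'a::ab_group_add \<Rightarrow> 'a) \<Rightarrow> (int \<Rightarrow> int \<Rightarrow> 'a set) \<Rightarrow> ('a tg list \<Rightarrow> 'a) \<Rightarrow> int \<Rightarrow> int \<Rightarrow> 'a \<Rightarrow> bool"
  for scale V l where
  gen_W: "x \<in> V d 1 \<Longrightarrow> gen_wt1 scale V l d 1 x"
| gen_zero: "gen_wt1 scale V l d w 0"
| gen_lin: "gen_wt1 scale V l d w x \<Longrightarrow> gen_wt1 scale V l d w y \<Longrightarrow>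
     gen_wt1 scale V l d w (scale a x + scale b y)"
| gen_op: "length ts \<ge> 1 \<Longrightarrow> list_all (\<lambda>t. gen_wt1 scale V l (tdeg t) (twt t) (tel t)) ts \<Longrightarrow>
     gen_wt1 scale V l (sdeg ts + int (length ts) - 2) (swt ts + 2 - int (length ts)) (l ts)"

end

theory Submission
  imports Defs
begin

(* For x in L of weight w >= 2 the one-letter word s x is a b-cocycle of weight w - 1 >= 1,
   since b strictly shortens words.  By Koszulness it is cohomologous to b g for some g.
   The one-letter component of a formal sum, read back in L, vanishes on the multilinearity
   and symmetry relations, so x equals the one-letter component of b g: a linear combination
   of brackets l_n(y_1, ..., y_n) of weight w with n >= 2.  As l_n has weight 2 - n and all
   weights are >= 1, every y_i has weight < w, and induction on the weight concludes. *)

locale Q_vector_space =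
  fixes scale :: "rat \<Rightarrow> 'a::ab_group_add \<Rightarrow> 'a"
  assumes is_Q_vector_space: "is_Q_vector_space scale"
begin

lemma scale_right_distrib: "scale a (x + y) = scale a x + scale a y"
  using is_Q_vector_space unfolding is_Q_vector_space_def by blast

lemma scale_left_distrib: "scale (a + b) x = scale a x + scale b x"
  using is_Q_vector_space unfolding is_Q_vector_space_def by blast

lemma scale_scale: "scale a (scale b x) = scale (a * b) x"
  using is_Q_vector_space unfolding is_Q_vector_space_def by blast

lemma scale_one: "scale 1 x = x"
  using is_Q_vector_space unfolding is_Q_vector_space_def by blast

lemma scale_zero_left: "scale 0 x = 0"
  using scale_left_distrib[of 0 0 x] by simp

lemma scale_zero_right: "scale a 0 = 0"
  using scale_right_distrib[of a 0 0] by simp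

lemma scale_diff_left: "scale (a - b) x = scale a x - scale b x"
  using scale_left_distrib[of "a - b" b x] by (simp add: algebra_simps)

lemma scale_sum_right: "scale a (\<Sum>e\<in>E. f e) = (\<Sum>e\<in>E. scale a (f e))"
  by (induction E rule: infinite_finite_induct) (simp_all add: scale_zero_right scale_right_distrib)

end

definition unary_support :: "int \<Rightarrow> int \<Rightarrow> 'a fsum \<Rightarrow> 'a set" where
  "unary_support d w f = {e. f [(d, w, e)] \<noteq> 0}"

lemma unary_support_fs_add:
  "unary_support d w (fs_add f g) \<subseteq> unary_support d w f \<union> unary_support d w g"
  by (auto simp: unary_support_def fs_add_def)

lemma unary_support_fs_diff:
  "unary_support d w (fs_diff f g) \<subseteq> unary_support d w f \<union> unary_support d w g"
  by (auto simp: unary_support_def fs_diff_def)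

lemma unary_support_fs_scale: "unary_support d w (fs_scale c f) \<subseteq> unary_support d w f"
  by (auto simp: unary_support_def fs_scale_def)

lemma unary_support_word: "unary_support d w (word ys) = {e. ys = [(d, w, e)]}"
  by (auto simp: unary_support_def word_def)

lemma finite_unary_support_word: "finite (unary_support d w (word ys))"
  by (rule finite_subset[of _ "{tel (hd ys)}"]) (auto simp: unary_support_word tel_def)

context Q_vector_space
begin

text \<open>The component of a formal sum on the one-letter words of tag \<open>(d, w)\<close>, read back in
  \<open>L\<close> (it is junk, namely \<open>0\<close>, if infinitely many such words occur).\<close>

definition unary_part :: "int \<Rightarrow> int \<Rightarrow> 'a fsum \<Rightarrow> 'a" where
  "unary_part d w f = (\<Sum>e\<in>unary_support d w f. scale (f [(d, w, e)]) e)"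

lemma unary_part_eq_sum:
  assumes "finite E" "unary_support d w f \<subseteq> E"
  shows "unary_part d w f = (\<Sum>e\<in>E. scale (f [(d, w, e)]) e)"
  unfolding unary_part_def
  by (rule sum.mono_neutral_left) (use assms in \<open>auto simp: unary_support_def scale_zero_left\<close>)

lemma unary_part_fs_add:
  assumes "finite (unary_support d w f)" "finite (unary_support d w g)"
  shows "unary_part d w (fs_add f g) = unary_part d w f + unary_part d w g"
proof -
  let ?E = "unary_support d w f \<union> unary_support d w g"
  have "unary_part d w (fs_add f g) = (\<Sum>e\<in>?E. scale (fs_add f g [(d, w, e)]) e)"
    using assms unary_support_fs_add[of d w f g] by (intro unary_part_eq_sum) auto
  also have "\<dots> = (\<Sum>e\<in>?E. scale (f [(d, w, e)]) e) + (\<Sum>e\<in>?E. scale (g [(d, w, e)]) e)"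
    by (simp add: fs_add_def scale_left_distrib sum.distrib)
  also have "\<dots> = unary_part d w f + unary_part d w g"
    using assms by (simp add: unary_part_eq_sum[of ?E])
  finally show ?thesis .
qed

lemma unary_part_fs_diff:
  assumes "finite (unary_support d w f)" "finite (unary_support d w g)"
  shows "unary_part d w (fs_diff f g) = unary_part d w f - unary_part d w g"
proof -
  let ?E = "unary_support d w f \<union> unary_support d w g"
  have "unary_part d w (fs_diff f g) = (\<Sum>e\<in>?E. scale (fs_diff f g [(d, w, e)]) e)"
    using assms unary_support_fs_diff[of d w f g] by (intro unary_part_eq_sum) auto
  also have "\<dots> = (\<Sum>e\<in>?E. scale (f [(d, w, e)]) e) - (\<Sum>e\<in>?E. scale (g [(d, w, e)]) e)"
    by (simp add: fs_diff_def scale_diff_left sum_subtractf)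
  also have "\<dots> = unary_part d w f - unary_part d w g"
    using assms by (simp add: unary_part_eq_sum[of ?E])
  finally show ?thesis .
qed

lemma unary_part_fs_scale:
  assumes "finite (unary_support d w f)"
  shows "unary_part d w (fs_scale c f) = scale c (unary_part d w f)"
proof -
  have "unary_part d w (fs_scale c f) = (\<Sum>e\<in>unary_support d w f. scale (c * f [(d, w, e)]) e)"
    using assms unary_support_fs_scale[of d w c f] by (subst unary_part_eq_sum) (auto simp: fs_scale_def)
  also have "\<dots> = scale c (unary_part d w f)"
    by (simp add: unary_part_def scale_sum_right scale_scale)
  finally show ?thesis .
qed

lemma unary_part_word_update:
  assumes "i < length ys"
  shows "unary_part d w (word (ys[i := (d', w', v)])) =
    (if length ys = 1 \<and> d' = d \<and> w' = w then v else 0)"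
proof (cases "length ys = 1 \<and> d' = d \<and> w' = w")
  case True
  then obtain t where "ys = [t]" "i = 0"
    using assms by (cases ys) auto
  with True show ?thesis
    by (simp add: unary_part_def unary_support_word) (simp add: word_def scale_one)
next
  case False
  then have "unary_support d w (word (ys[i := (d', w', v)])) = {}"
    using assms by (cases ys; cases i) (auto simp: unary_support_word)
  with False show ?thesis
    by (auto simp: unary_part_def)
qed

text \<open>So \<open>unary_part\<close> is well defined on the Chevalley--Eilenberg complex, the quotient of
  formal sums by \<open>rel_space\<close>.\<close>

lemma rel_space_unary_part:
  assumes "f \<in> rel_space scale V"
  shows "finite (unary_support d w f) \<and> unary_part d w f = 0"
  using assms
proof (induction rule: rel_space.induct)
  case rel_zero
  show ?case by (simp add: unary_support_def unary_part_def)
next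
  case (rel_add f g)
  then show ?case
    using unary_support_fs_add[of d w f g] by (simp add: unary_part_fs_add finite_subset)
next
  case (rel_scale f c)
  then show ?case
    using unary_support_fs_scale[of d w c f]
    by (simp add: unary_part_fs_scale scale_zero_right finite_subset)
next
  case (rel_lin ys i x d' w' y a b)
  let ?u = "\<lambda>v. word (ys[i := (d', w', v)])"
  let ?comb = "fs_add (fs_scale a (?u x)) (fs_scale b (?u y))"
  have fin_scaled: "finite (unary_support d w (fs_scale c (?u v)))" for c v
    using unary_support_fs_scale finite_unary_support_word by (rule finite_subset)
  have fin_comb: "finite (unary_support d w ?comb)"
    by (rule finite_subset[OF unary_support_fs_add]) (simp add: fin_scaled)
  have "unary_part d w ?comb = scale a (unary_part d w (?u x)) + scale b (unary_part d w (?u y))"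
    by (simp add: unary_part_fs_add fin_scaled unary_part_fs_scale finite_unary_support_word)
  then have "unary_part d w (fs_diff (?u (scale a x + scale b y)) ?comb) = 0"
    using rel_lin.hyps(2)
    by (simp add: unary_part_fs_diff finite_unary_support_word fin_comb unary_part_word_update
        scale_zero_right)
  moreover have "finite (unary_support d w (fs_diff (?u (scale a x + scale b y)) ?comb))"
    by (rule finite_subset[OF unary_support_fs_diff]) (simp add: fin_comb finite_unary_support_word)
  ultimately show ?case
    by simp
next
  case (rel_sym us s t vs)
  have "unary_support d w (fs_diff (word (us @ [s, t] @ vs))
      (fs_scale (sgn (shdeg s * shdeg t)) (word (us @ [t, s] @ vs)))) = {}"
    by (auto simp: unary_support_def fs_diff_def fs_scale_def word_def)
  then show ?case
    by (simp add: unary_part_def)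
qed

end

lemma supp_word: "supp (word ys) = {ys}"
  by (auto simp: supp_def word_def)

lemma cod_word_singleton_nonzero:
  assumes "cod_word K l ys [t] \<noteq> 0"
  shows "length ys \<in> K \<and> t = out_tag l ys"
proof -
  obtain S where S: "S \<subseteq> {..<length ys}" "card S \<in> K"
    "[t] = out_tag l (nths ys S) # nths ys ({..<length ys} - S)"
  proof (rule ccontr)
    assume "\<not> thesis"
    with that have "\<forall>S\<in>{S. S \<subseteq> {..<length ys} \<and> card S \<in> K}.
        (if [t] = out_tag l (nths ys S) # nths ys ({..<length ys} - S)
         then kos_sign S ys * dec_sign (nths ys S) else 0) = 0"
      by auto
    then have "cod_word K l ys [t] = 0"
      unfolding cod_word_def by (rule sum.neutral)
    with assms show False
      by simp
  qed
  have "length (nths ys ({..<length ys} - S)) = 0"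
    using S(3) by simp
  then have "{i. i < length ys \<and> i \<in> {..<length ys} - S} = {}"
    by (simp add: length_nths)
  then have "S = {..<length ys}"
    using S(1) by auto
  with S show ?thesis
    by (simp add: nths_all)
qed

lemma CE_b_word_singleton: "CE_b l (word [t]) = (\<lambda>z. 0)"
proof
  fix z
  have "card S \<le> 1" if "S \<subseteq> {..<length [t]}" for S
    using card_mono[OF finite_lessThan that] by simp
  then have "{S. S \<subseteq> {..<length [t]} \<and> card S \<in> {2..}} = {}"
    by (auto simp: not_less_eq_eq)
  then have "cod_word {2..} l [t] z = 0"
    unfolding cod_word_def by (simp only: sum.empty)
  then show "CE_b l (word [t]) z = 0"
    by (simp add: CE_b_def cod_def supp_word)
qed

lemma CE_b_singleton_nonzero:
  assumes "CE_b l g [t] \<noteq> 0"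
  obtains ys where "ys \<in> supp g" "length ys \<ge> 2" "t = out_tag l ys"
proof -
  have "(\<Sum>ys\<in>supp g. g ys * cod_word {2..} l ys [t]) \<noteq> 0"
    using assms by (simp add: CE_b_def cod_def)
  then obtain ys where "ys \<in> supp g" "g ys * cod_word {2..} l ys [t] \<noteq> 0"
    by (rule sum.not_neutral_contains_not_neutral)
  then have "ys \<in> supp g" "cod_word {2..} l ys [t] \<noteq> 0"
    by simp_all
  with cod_word_singleton_nonzero that show ?thesis
    by fastforce
qed

lemma word_weight_eq: "word_weight ys = swt ys - int (length ys)"
  by (induction ys) (simp_all add: word_weight_def swt_def)

lemma (in Q_vector_space) gen_wt1_scale:
  "gen_wt1 scale V l d w x \<Longrightarrow> gen_wt1 scale V l d w (scale c x)"
  using gen_lin[of scale V l d w x x c 0] by (simp add: scale_zero_left)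

lemma (in Q_vector_space) gen_wt1_sum:
  "(\<And>e. e \<in> A \<Longrightarrow> gen_wt1 scale V l d w (f e)) \<Longrightarrow> gen_wt1 scale V l d w (\<Sum>e\<in>A. f e)"
proof (induction A rule: infinite_finite_induct)
  case (insert a A)
  then have "gen_wt1 scale V l d w (scale 1 (f a) + scale 1 (\<Sum>e\<in>A. f e))"
    by (intro gen_lin) auto
  with insert show ?case
    by (simp add: scale_one)
qed (simp_all add: gen_zero)

locale L_infinity_algebra =
  fixes scale :: "rat \<Rightarrow> 'a::ab_group_add \<Rightarrow> 'a"
    and V :: "int \<Rightarrow> int \<Rightarrow> 'a set"
    and l :: "'a tg list \<Rightarrow> 'a"
  assumes Linf_algebra: "Linf_algebra scale V l"

sublocale L_infinity_algebra \<subseteq> Q_vector_space scale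
  using Linf_algebra by unfold_locales (simp add: Linf_algebra_def)

context L_infinity_algebra
begin

lemma zero_mem_V: "0 \<in> V d w"
  using Linf_algebra by (simp add: Linf_algebra_def is_subspace_def)

lemma l_eq_zero_if_zero_entry:
  assumes "list_all (valid V) ys" "i < length ys" "tel (ys ! i) = 0"
  shows "l ys = 0"
proof -
  obtain d w where entry: "ys ! i = (d, w, 0)"
    using assms(3) by (cases "ys ! i") (simp add: tel_def)
  have "l (ys[i := (d, w, scale 0 0 + scale 0 0)]) =
      scale 0 (l (ys[i := (d, w, 0)])) + scale 0 (l (ys[i := (d, w, 0)]))"
    using Linf_algebra assms(1,2) zero_mem_V unfolding Linf_algebra_def l_multilinear_def by blast
  moreover have "ys[i := (d, w, scale 0 0 + scale 0 0)] = ys"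
    using entry list_update_id[of ys i] by (simp add: scale_zero_left)
  ultimately show ?thesis
    by (simp add: scale_zero_left)
qed

end

locale Koszul_L_infinity_algebra = L_infinity_algebra +
  assumes koszul: "koszul scale V l"
begin

lemma V_trivial_below_weight_one: "w < 1 \<Longrightarrow> V d w = {0}"
  using koszul by (simp add: koszul_def)

lemma koszul_exact:
  assumes "p \<ge> 1" "CE_elem V f" "of_weight p f" "CE_b l f \<in> rel_space scale V"
  obtains g where "CE_elem V g" "of_weight (p - 1) g" "fs_diff f (CE_b l g) \<in> rel_space scale V"
  using koszul assms unfolding koszul_def by blast

text \<open>A bracket with an input of weight \<open>< 1\<close> vanishes; otherwise, as \<open>l\<^sub>n\<close> has weight
  \<open>2 - n\<close>, each input weight is below the output weight.\<close>

lemma gen_wt1_bracket: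
  assumes valid: "list_all (valid V) ys" and nonempty: "length ys \<ge> 1"
    and lower: "\<And>d' w' y. y \<in> V d' w' \<Longrightarrow> 1 \<le> w' \<Longrightarrow> w' < swt ys + 2 - int (length ys) \<Longrightarrow>
      gen_wt1 scale V l d' w' y"
  shows "gen_wt1 scale V l (sdeg ys + int (length ys) - 2) (swt ys + 2 - int (length ys)) (l ys)"
proof (cases "\<exists>t\<in>set ys. twt t < 1")
  case True
  then obtain i where i: "i < length ys" "twt (ys ! i) < 1"
    by (auto simp: in_set_conv_nth)
  with valid have "tel (ys ! i) = 0"
    using V_trivial_below_weight_one by (auto simp: list_all_length valid_def)
  then have "l ys = 0"
    by (rule l_eq_zero_if_zero_entry[OF valid i(1)])
  then show ?thesis
    by (simp add: gen_zero)
next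
  case False
  have "gen_wt1 scale V l (tdeg t) (twt t) (tel t)" if t: "t \<in> set ys" for t
  proof (rule lower)
    show "tel t \<in> V (tdeg t) (twt t)"
      using valid t by (simp add: list_all_iff valid_def)
    show "1 \<le> twt t"
      using False t by auto
    have "twt t - 1 \<le> word_weight ys"
      unfolding word_weight_def using False t by (intro member_le_sum_list) auto
    then show "twt t < swt ys + 2 - int (length ys)"
      by (simp add: word_weight_eq)
  qed
  then show ?thesis
    using gen_op[OF nonempty] by (simp add: list_all_iff)
qed

lemma boundary_with_unary_part:
  assumes x: "x \<in> V d w" and "w \<ge> 2"
  obtains g where "CE_elem V g" "x = unary_part d w (CE_b l g)"
proof -
  let ?f = "word [(d, w, x)]"
  have "CE_elem V ?f"
    using x by (simp add: CE_elem_def supp_word valid_def tdeg_def twt_def tel_def)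
  moreover have "of_weight (w - 1) ?f"
    by (simp add: of_weight_def supp_word word_weight_def twt_def)
  moreover have "CE_b l ?f \<in> rel_space scale V"
    by (simp add: CE_b_word_singleton rel_zero)
  ultimately obtain g where g: "CE_elem V g" and rel: "fs_diff ?f (CE_b l g) \<in> rel_space scale V"
    using koszul_exact[of "w - 1" ?f] \<open>w \<ge> 2\<close> by auto
  have fin_f: "finite (unary_support d w ?f)"
    by (rule finite_unary_support_word)
  have "unary_support d w (CE_b l g) \<subseteq>
      unary_support d w ?f \<union> unary_support d w (fs_diff ?f (CE_b l g))"
    by (auto simp: unary_support_def fs_diff_def)
  then have fin_b: "finite (unary_support d w (CE_b l g))"
    using fin_f rel_space_unary_part[OF rel, of d w] by (meson finite_UnI finite_subset)
  have "unary_part d w ?f = x"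
    using unary_part_word_update[of 0 "[(d, w, x)]" d w d w x] by simp
  then have "x = unary_part d w (CE_b l g)"
    using rel_space_unary_part[OF rel, of d w] by (simp add: unary_part_fs_diff[OF fin_f fin_b])
  with g that show ?thesis
    by blast
qed

lemma unary_part_CE_b_generated:
  assumes g: "CE_elem V g"
    and lower: "\<And>d' w' y. y \<in> V d' w' \<Longrightarrow> 1 \<le> w' \<Longrightarrow> w' < w \<Longrightarrow> gen_wt1 scale V l d' w' y"
  shows "gen_wt1 scale V l d w (unary_part d w (CE_b l g))"
  unfolding unary_part_def
proof (rule gen_wt1_sum, rule gen_wt1_scale)
  fix e
  assume "e \<in> unary_support d w (CE_b l g)"
  then obtain ys where ys: "ys \<in> supp g" "length ys \<ge> 2" "(d, w, e) = out_tag l ys"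
    by (auto simp: unary_support_def elim: CE_b_singleton_nonzero)
  have valid: "list_all (valid V) ys"
    using g ys(1) by (simp add: CE_elem_def)
  have tag: "d = sdeg ys + int (length ys) - 2" "w = swt ys + 2 - int (length ys)" "e = l ys"
    using ys(3) by (simp_all add: out_tag_def)
  have "gen_wt1 scale V l (sdeg ys + int (length ys) - 2) (swt ys + 2 - int (length ys)) (l ys)"
  proof (rule gen_wt1_bracket[OF valid])
    show "length ys \<ge> 1"
      using ys(2) by simp
    show "gen_wt1 scale V l d' w' y"
      if "y \<in> V d' w'" "1 \<le> w'" "w' < swt ys + 2 - int (length ys)" for d' w' y
      using lower that tag(2) by simp
  qed
  with tag show "gen_wt1 scale V l d w e"
    by simp
qed

theorem gen_wt1_if_mem_V:
  assumes "x \<in> V d w"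
  shows "gen_wt1 scale V l d w x"
  using assms
proof (induction "nat w" arbitrary: d w x rule: less_induct)
  case less
  consider "w < 1" | "w = 1" | "w \<ge> 2"
    by linarith
  then show ?case
  proof cases
    case 1
    then show ?thesis
      using less.prems V_trivial_below_weight_one by (simp add: gen_zero)
  next
    case 2
    then show ?thesis
      using less.prems by (simp add: gen_W)
  next
    case 3
    obtain g where g: "CE_elem V g" and x: "x = unary_part d w (CE_b l g)"
      by (rule boundary_with_unary_part[OF less.prems 3])
    have lower: "gen_wt1 scale V l d' w' y" if "y \<in> V d' w'" "1 \<le> w'" "w' < w" for d' w' y
      using less.hyps that by force
    show ?thesis
      unfolding x by (rule unary_part_CE_b_generated[OF g lower])
  qed
qed

end

theorem proposition2p24:
  fixes scale :: "rat \<Rightarrow> 'a::ab_group_add \<Rightarrow> 'a"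
    and V :: "int \<Rightarrow> int \<Rightarrow> 'a set"
    and l :: "(int \<times> int \<times> 'a) list \<Rightarrow> 'a"
  assumes "Linf_algebra scale V l"
    and "minimal_Linf V l"
    and "koszul scale V l"
  shows "\<forall>d w x. x \<in> V d w \<longrightarrow> gen_wt1 scale V l d w x"
proof -
  interpret Koszul_L_infinity_algebra scale V l
    using assms(1,3) by unfold_locales
  show ?thesis
    using gen_wt1_if_mem_V by blast
qed

end
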